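(* Let $n\ge3$ and $B_n=\langle a,b\mid ba=b^n\rangle$. 1. $\rho(B_n)=n-1>\rho(L)$ for every $L\in\mathcal L(B_n)$. 2. For every $\ell\ge2$, \[\mathcal U_\ell(B_n)=\ell-q_{\ell,n}(n-2)+(n-2)\cdot[0,\,q_{\ell,n}+\ell-1],\] where $q_{\ell,n}=\lfloor \ell/(n-1)\rfloor$ if $(n-1)\nmid \ell$ and $q_{\ell,n}=\frac{\ell}{n-1}-1$ if $(n-1)\mid\ell$.
   Context: $B_n$ is the monoid with generators $a,b$ and the single relation $ba=b^n$; it is reduced and atomic with atoms $a,b$. $\mathsf L(y)$ is the set of all $k$ such that $y$ is a product of $k$ atoms ($\mathsf L(1)=\{0\}$), $\mathcal L(B_n)=\{\mathsf L(y)\}$. For $L\subset\mathbb N_0$, $\rho(L)=\sup(L\cap\mathbb N)/\min(L\cap\mathbb N)$ if $L\cap\mathbb N\ne\emptyset$ and $\rho(L)=1$ otherwise; $\rho(B_n)=\sup_{L\in\mathcal L(B_n)}\rho(L)$. $\mathcal U_\ell(B_n)=\bigcup\{L\in\mathcal L(B_n)\mid \ell\in L\}$. Notation: $m+d\cdot[0,q]=\{m,m+d,\dots,m+qd\}$. *)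

theory Defs
  imports Complex_Main "HOL-Library.Extended_Real"
begin

text \<open>Generators of the monoid B_n = < a, b | b a = b^n >.  Elements of B_n are
  words over {a,b} modulo the congruence generated by the defining relation.\<close>

datatype gen = GA | GB

definition Bstep :: "nat \<Rightarrow> gen list \<Rightarrow> gen list \<Rightarrow> bool" where
  "Bstep n u v \<longleftrightarrow> (\<exists>x y. u = x @ [GB, GA] @ y \<and> v = x @ replicate n GB @ y)"

definition Beq :: "nat \<Rightarrow> gen list \<Rightarrow> gen list \<Rightarrow> bool" where
  "Beq n = equivclp (Bstep n)"

text \<open>Length set of the element represented by the word w: since the atoms of B_n are
  exactly a and b, factorizations into atoms are exactly words representing the element.\<close>
definition Lset :: "nat \<Rightarrow> gen list \<Rightarrow> nat set" where
  "Lset n w = {length v | v. Beq n w v}"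

definition calL :: "nat \<Rightarrow> nat set set" where
  "calL n = {Lset n w | w. True}"

definition rhoL :: "nat set \<Rightarrow> ereal" where
  "rhoL L = (if L - {0} \<noteq> {}
             then (SUP k\<in>L - {0}. ereal (real k)) / ereal (real (Min (L - {0})))
             else 1)"

definition rhoB :: "nat \<Rightarrow> ereal" where
  "rhoB n = (SUP L\<in>calL n. rhoL L)"

definition calU :: "nat \<Rightarrow> nat \<Rightarrow> nat set" where
  "calU n l = \<Union> {L \<in> calL n. l \<in> L}"

definition qln :: "nat \<Rightarrow> nat \<Rightarrow> nat" where
  "qln l n = (if (n - 1) dvd l then l div (n - 1) - 1 else l div (n - 1))"

end

theory Submission
  imports Defs "HOL-Real_Asymp.Real_Asymp"
begin

text \<open>The relation b a = b^n only moves letters a to the right of letters b, as in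
  b a^m = b^(1 + m(n-1)); hence every element of B_n is a^i b^j for a unique pair (i, j),
  which is computed by an invariant of the rewriting steps. A word represents a^i b^j with j > 0
  exactly when its length is i + j - m(n-2) for some m with m(n-1) < j, m being the number of
  letters a after its first letter b. So every length set is a progression with difference n-2
  and maximum i + j whose minimum exceeds (i + j)/(n-1), while the length sets of
  b^(M(n-1)+1), reaching down to M + 1, push the elasticity up to n-1. The length sets
  containing l lie in {l - t(n-2) | t(n-1) < l} \<union> {l + t(n-2) | t < l}, and those of b^l and
  b^(l + t(n-2)) cover this set.\<close>

lemma equivclp_map:
  assumes "\<And>x y. r x y \<Longrightarrow> r (f x) (f y)" and "equivclp r a b"
  shows "equivclp r (f a) (f b)"
  using assms(2)
proof (induction rule: equivclp_induct)
  case (step y z)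
  then have "symclp r (f y) (f z)" using assms(1) by (auto simp: symclp_def)
  with step.IH show ?case unfolding equivclp_def by (rule rtranclp.rtrancl_into_rtrancl)
qed (simp add: equivclp_def)

text \<open>Bnf n w = (i, j) when the word w represents a^i b^j in B_n.\<close>
fun Bnf :: "nat \<Rightarrow> gen list \<Rightarrow> nat \<times> nat" where
  "Bnf n [] = (0, 0)"
| "Bnf n (GA # w) = (Suc (fst (Bnf n w)), snd (Bnf n w))"
| "Bnf n (GB # w) = (0, Suc (fst (Bnf n w) * (n - 1) + snd (Bnf n w)))"

fun nf_word :: "nat \<times> nat \<Rightarrow> gen list" where
  "nf_word (i, j) = replicate i GA @ replicate j GB"

lemma Bnf_append_cong: "Bnf n w = Bnf n w' \<Longrightarrow> Bnf n (x @ w) = Bnf n (x @ w')"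
proof (induction x)
  case (Cons c x) then show ?case by (cases c) auto
qed simp

lemma Bnf_replicate_GA_append:
  "Bnf n (replicate k GA @ w) = (k + fst (Bnf n w), snd (Bnf n w))"
  by (induction k) auto

lemma Bnf_replicate_GB_append:
  "0 < k \<Longrightarrow> Bnf n (replicate k GB @ w) = (0, k + fst (Bnf n w) * (n - 1) + snd (Bnf n w))"
proof (induction k)
  case (Suc k) then show ?case by (cases k) auto
qed simp

lemma Bnf_replicate_GB [simp]: "Bnf n (replicate k GB) = (0, k)"
  by (induction k) auto

lemma Bnf_nf_word [simp]: "Bnf n (nf_word p) = p"
  by (cases p) (simp add: Bnf_replicate_GA_append)

lemma Bstep_imp_Bnf_eq:
  assumes "1 \<le> n" and "Bstep n u v"
  shows "Bnf n u = Bnf n v"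
proof -
  obtain x y where u: "u = x @ [GB, GA] @ y" and v: "v = x @ replicate n GB @ y"
    using assms(2) unfolding Bstep_def by blast
  have "Suc (Suc k * (n - 1) + m) = n + k * (n - 1) + m" for k m
    using assms(1) by (cases n) auto
  then have "Bnf n ([GB, GA] @ y) = Bnf n (replicate n GB @ y)"
    using assms(1) by (simp add: Bnf_replicate_GB_append)
  then show ?thesis unfolding u v by (rule Bnf_append_cong)
qed

lemma Beq_imp_Bnf_eq:
  assumes "1 \<le> n" and "Beq n u v"
  shows "Bnf n u = Bnf n v"
  using assms(2) unfolding Beq_def
  by (induction rule: equivclp_induct) (auto dest: Bstep_imp_Bnf_eq[OF assms(1)])

lemma Beq_trans [trans]: "Beq n u v \<Longrightarrow> Beq n v w \<Longrightarrow> Beq n u w"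
  unfolding Beq_def by (rule transpD[OF transp_equivclp])

lemma Beq_append_left:
  assumes "Beq n u v"
  shows "Beq n (x @ u) (x @ v)"
proof -
  have "Bstep n (x @ u') (x @ v')" if "Bstep n u' v'" for u' v'
    using that unfolding Bstep_def by (metis append.assoc)
  then show ?thesis using assms unfolding Beq_def by (rule equivclp_map)
qed

lemma Beq_GB_nf_word:
  assumes "1 \<le> n"
  shows "Beq n (GB # nf_word (i, j)) (replicate (Suc (i * (n - 1) + j)) GB)"
proof (induction i)
  case 0 then show ?case by (simp add: Beq_def)
next
  case (Suc i)
  have "Bstep n (GB # nf_word (Suc i, j)) (replicate (n - 1) GB @ GB # nf_word (i, j))"
    unfolding Bstep_def using assms
    by (intro exI[of _ "[]"] exI[of _ "nf_word (i, j)"])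
      (cases n, simp_all add: replicate_append_same)
  then have "Beq n (GB # nf_word (Suc i, j)) (replicate (n - 1) GB @ GB # nf_word (i, j))"
    unfolding Beq_def by (metis r_into_rtranclp rtranlcp_le_equivclp predicate2D)
  also have "Beq n \<dots> (replicate (n - 1) GB @ replicate (Suc (i * (n - 1) + j)) GB)"
    by (rule Beq_append_left[OF Suc])
  also have "\<dots> = replicate (Suc (Suc i * (n - 1) + j)) GB"
    by (simp only: replicate_add[symmetric]) (simp add: add.assoc)
  finally show ?case .
qed

lemma Beq_nf_word: "1 \<le> n \<Longrightarrow> Beq n w (nf_word (Bnf n w))"
proof (induction w)
  case Nil then show ?case by (simp add: Beq_def)
next
  case (Cons c w)
  obtain i j where ij: "Bnf n w = (i, j)" by fastforce
  have IH: "Beq n (c # w) (c # nf_word (i, j))"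
    using Beq_append_left[OF Cons.IH[OF Cons.prems], of "[c]"] ij by simp
  show ?case
  proof (cases c)
    case GA then show ?thesis using IH ij by simp
  next
    case GB
    then show ?thesis
      using Beq_trans[OF IH[unfolded GB] Beq_GB_nf_word[OF Cons.prems]] ij by simp
  qed
qed

theorem Beq_iff_Bnf_eq: "1 \<le> n \<Longrightarrow> Beq n u v \<longleftrightarrow> Bnf n u = Bnf n v"
  using Beq_imp_Bnf_eq Beq_nf_word Beq_trans unfolding Beq_def
  by (metis equivclp_sym)

definition nf_lengths :: "nat \<Rightarrow> nat \<times> nat \<Rightarrow> nat set" where
  "nf_lengths n p = {length v | v. Bnf n v = p}"

lemma Lset_eq_nf_lengths: "1 \<le> n \<Longrightarrow> Lset n w = nf_lengths n (Bnf n w)"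
  unfolding Lset_def nf_lengths_def by (simp add: Beq_iff_Bnf_eq eq_commute[of "Bnf n w"])

lemma calL_eq_range_nf_lengths: "1 \<le> n \<Longrightarrow> calL n = range (nf_lengths n)"
  unfolding calL_def by (auto simp: Lset_eq_nf_lengths) (metis Bnf_nf_word)

lemma length_if_Bnf_eq_Pair_0: "Bnf n v = (i, 0) \<Longrightarrow> length v = i"
proof (induction v arbitrary: i)
  case (Cons c v)
  obtain a b where "Bnf n v = (a, b)" by fastforce
  with Cons show ?case by (cases c) auto
qed simp

lemma length_Bnf_GB:
  assumes "Bnf (Suc (Suc d)) v = (i, j)" and "0 < j"
  shows "\<exists>m. m * (d + 1) < j \<and> length v + m * d = i + j"
  using assms
proof (induction v arbitrary: i j)
  case (Cons c v)
  obtain i' j' where v: "Bnf (Suc (Suc d)) v = (i', j')" by fastforce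
  show ?case
  proof (cases c)
    case GA
    then show ?thesis using Cons v by auto
  next
    case GB
    then have ij: "i = 0" "j = Suc (i' * (d + 1) + j')" using Cons.prems v by auto
    show ?thesis
    proof (cases "j' = 0")
      case True
      then have "length v = i'" using length_if_Bnf_eq_Pair_0 v by blast
      then show ?thesis using ij True by (intro exI[of _ i']) (simp add: algebra_simps)
    next
      case False
      then obtain m where "m * (d + 1) < j'" "length v + m * d = i' + j'"
        using Cons.IH v by blast
      then show ?thesis using ij by (intro exI[of _ "m + i'"]) (simp add: algebra_simps)
    qed
  qed
qed simp

lemma nf_lengths_no_GB [simp]: "nf_lengths n (i, 0) = {i}"
  unfolding nf_lengths_def
  using Bnf_replicate_GA_append[of n i "[]"]
  by (auto dest: length_if_Bnf_eq_Pair_0 intro!: exI[of _ "replicate i GA"])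

lemma nf_lengths_GB:
  assumes "0 < j"
  shows "nf_lengths (Suc (Suc d)) (i, j) = {x. \<exists>m. m * (d + 1) < j \<and> x + m * d = i + j}"
proof (intro set_eqI iffI)
  fix x assume "x \<in> nf_lengths (Suc (Suc d)) (i, j)"
  then show "x \<in> {x. \<exists>m. m * (d + 1) < j \<and> x + m * d = i + j}"
    unfolding nf_lengths_def using length_Bnf_GB assms by blast
next
  fix x assume "x \<in> {x. \<exists>m. m * (d + 1) < j \<and> x + m * d = i + j}"
  then obtain m where m: "m * (d + 1) < j" "x + m * d = i + j" by blast
  let ?v = "replicate i GA @ GB # nf_word (m, j - 1 - m * (d + 1))"
  have "Bnf (Suc (Suc d)) ?v = (i, j)" "length ?v = x"
    using m by (auto simp: Bnf_replicate_GA_append algebra_simps)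
  then show "x \<in> nf_lengths (Suc (Suc d)) (i, j)" unfolding nf_lengths_def by blast
qed

lemma rhoL_singleton [simp]: "rhoL {i} = 1"
  by (cases "i = 0") (simp_all add: rhoL_def)

lemma rhoL_eq_Max_div_Min:
  assumes "finite L" and "L \<noteq> {}" and "0 \<notin> L"
  shows "rhoL L = ereal (real (Max L) / real (Min L))"
proof -
  have "(SUP k\<in>L. ereal (real k)) = ereal (real (Max L))"
    using assms(1,2) by (intro antisym SUP_least SUP_upper2[of "Max L"]) auto
  moreover have "L - {0} = L" using assms(3) by blast
  moreover have "0 < Min L" using assms by (metis Min_in neq0_conv)
  ultimately show ?thesis using assms(2) unfolding rhoL_def by simp
qed

lemma nf_lengths_GB_bounds:
  assumes "0 < j" and "x \<in> nf_lengths (Suc (Suc d)) (i, j)"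
  shows "0 < x" and "x \<le> i + j"
proof -
  obtain m where "m * (d + 1) < j" and "x + m * d = i + j"
    using assms by (auto simp: nf_lengths_GB)
  then show "0 < x" and "x \<le> i + j" by (simp_all add: algebra_simps)
qed

lemma sum_mem_nf_lengths_GB: "0 < j \<Longrightarrow> i + j \<in> nf_lengths (Suc (Suc d)) (i, j)"
  by (subst nf_lengths_GB) (auto intro: exI[of _ 0])

lemma finite_nf_lengths_GB: "0 < j \<Longrightarrow> finite (nf_lengths (Suc (Suc d)) (i, j))"
  by (rule finite_subset[of _ "{..i + j}"]) (auto dest: nf_lengths_GB_bounds(2))

lemma Max_nf_lengths_GB: "0 < j \<Longrightarrow> Max (nf_lengths (Suc (Suc d)) (i, j)) = i + j"
  by (intro Max_eqI finite_nf_lengths_GB sum_mem_nf_lengths_GB)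
    (auto dest: nf_lengths_GB_bounds(2))

lemma rhoL_nf_lengths_GB:
  assumes "0 < j"
  shows "rhoL (nf_lengths (Suc (Suc d)) (i, j))
    = ereal (real (i + j) / real (Min (nf_lengths (Suc (Suc d)) (i, j))))"
proof -
  have "nf_lengths (Suc (Suc d)) (i, j) \<noteq> {}" and "0 \<notin> nf_lengths (Suc (Suc d)) (i, j)"
    using sum_mem_nf_lengths_GB[OF assms, of i d] nf_lengths_GB_bounds(1)[OF assms, of 0 d i]
    by auto
  then show ?thesis
    using assms by (simp add: rhoL_eq_Max_div_Min finite_nf_lengths_GB Max_nf_lengths_GB)
qed

lemma rhoL_nf_lengths_less:
  assumes "1 \<le> d"
  shows "rhoL (nf_lengths (Suc (Suc d)) p) < ereal (real (d + 1))"
proof (cases p)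
  case (Pair i j)
  show ?thesis
  proof (cases "j = 0")
    case True then show ?thesis using Pair assms by simp
  next
    case False
    let ?L = "nf_lengths (Suc (Suc d)) (i, j)"
    have "Min ?L \<in> ?L"
      using False sum_mem_nf_lengths_GB[of j i d] by (intro Min_in finite_nf_lengths_GB) auto
    then obtain m where m: "m * (d + 1) < j" "Min ?L + m * d = i + j"
      using False by (auto simp: nf_lengths_GB)
    then have "m < Min ?L" by (simp add: algebra_simps)
    then have "i + j < (d + 1) * Min ?L"
      using m(2) assms mult_le_mono2[of "m + 1" "Min ?L" d] by (simp add: algebra_simps)
    then have "real (i + j) < real (d + 1) * real (Min ?L)"
      by (metis of_nat_less_iff of_nat_mult)
    then have "real (i + j) / real (Min ?L) < real (d + 1)"
      using \<open>m < Min ?L\<close> by (simp add: divide_less_eq)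
    then show ?thesis using False Pair by (simp add: rhoL_nf_lengths_GB)
  qed
qed

lemma rhoL_nf_lengths_b_power:
  "rhoL (nf_lengths (Suc (Suc d)) (0, M * (d + 1) + 1))
    = ereal (real (M * (d + 1) + 1) / real (M + 1))"
proof -
  let ?L = "nf_lengths (Suc (Suc d)) (0, M * (d + 1) + 1)"
  have L: "?L = {x. \<exists>m. m * (d + 1) < M * (d + 1) + 1 \<and> x + m * d = M * (d + 1) + 1}"
    by (simp add: nf_lengths_GB)
  have "M + 1 \<in> ?L" unfolding L by (intro CollectI exI[of _ M]) (simp add: algebra_simps)
  moreover have "M + 1 \<le> x" if x: "x \<in> ?L" for x
  proof -
    obtain m where m: "m * (d + 1) < M * (d + 1) + 1" "x + m * d = M * (d + 1) + 1"
      using x unfolding L by blast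
    then have "m \<le> M" by (metis Suc_eq_plus1 less_Suc_eq_le mult_le_cancel2 zero_less_Suc)
    then have "m * d \<le> M * d" by (rule mult_le_mono1)
    moreover have "x + m * d = M * d + (M + 1)" using m(2) by (simp add: algebra_simps)
    ultimately show ?thesis by linarith
  qed
  ultimately have "Min ?L = M + 1"
    by (intro Min_eqI finite_nf_lengths_GB) auto
  then show ?thesis by (simp add: rhoL_nf_lengths_GB)
qed

lemma rhoB_eq:
  assumes "1 \<le> d"
  shows "rhoB (Suc (Suc d)) = ereal (real (d + 1))"
proof (rule antisym)
  have calL: "calL (Suc (Suc d)) = range (nf_lengths (Suc (Suc d)))"
    by (simp add: calL_eq_range_nf_lengths)
  show "rhoB (Suc (Suc d)) \<le> ereal (real (d + 1))"
    unfolding rhoB_def calL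
    using rhoL_nf_lengths_less[OF assms] by (intro SUP_least) (auto intro: less_imp_le)
  have witness: "ereal (real (M * (d + 1) + 1) / real (M + 1)) \<le> rhoB (Suc (Suc d))" for M
    unfolding rhoB_def calL
    by (rule SUP_upper2[OF rangeI[of _ "(0, M * (d + 1) + 1)"]])
      (simp only: rhoL_nf_lengths_b_power order_refl)
  have "(\<lambda>M. ereal (real (M * (d + 1) + 1) / real (M + 1))) \<longlonglongrightarrow> ereal (real (d + 1))"
    unfolding lim_ereal by real_asymp
  then show "ereal (real (d + 1)) \<le> rhoB (Suc (Suc d))"
    by (rule LIMSEQ_le_const2) (use witness in blast)
qed

lemma nf_lengths_GB_mem_pair:
  assumes "0 < j"
    and "l \<in> nf_lengths (Suc (Suc d)) (i, j)" and "x \<in> nf_lengths (Suc (Suc d)) (i, j)"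
  shows "x \<in> {l - t * d | t. t * (d + 1) < l} \<union> {l + t * d | t. t < l}"
proof -
  obtain m where m: "m * (d + 1) < j" "x + m * d = i + j"
    using assms(1,3) by (auto simp: nf_lengths_GB)
  obtain m' where m': "m' * (d + 1) < j" "l + m' * d = i + j"
    using assms(1,2) by (auto simp: nf_lengths_GB)
  show ?thesis
  proof (cases "m' \<le> m")
    case True
    then obtain t where t: "m = m' + t" using le_Suc_ex by blast
    have "t * (d + 1) < l" and "x = l - t * d"
      using m m' unfolding t by (simp_all add: algebra_simps)
    then show ?thesis by blast
  next
    case False
    then obtain t where t: "m' = m + t" using le_Suc_ex[of m m'] by auto
    have "t < l" and "x = l + t * d" using m m' unfolding t by (simp_all add: algebra_simps)
    then show ?thesis by blast
  qed
qed

lemma calU_eq_progressions: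
  assumes "1 \<le> l"
  shows "calU (Suc (Suc d)) l = {l - t * d | t. t * (d + 1) < l} \<union> {l + t * d | t. t < l}"
proof (intro equalityI subsetI)
  fix x assume "x \<in> calU (Suc (Suc d)) l"
  then obtain i j
    where l: "l \<in> nf_lengths (Suc (Suc d)) (i, j)" and x: "x \<in> nf_lengths (Suc (Suc d)) (i, j)"
    unfolding calU_def by (auto simp: calL_eq_range_nf_lengths)
  show "x \<in> {l - t * d | t. t * (d + 1) < l} \<union> {l + t * d | t. t < l}"
  proof (cases "j = 0")
    case True
    then have "x = l - 0 * d" using l x by simp
    then show ?thesis using assms by fastforce
  next
    case False
    then show ?thesis using nf_lengths_GB_mem_pair l x by blast
  qed
next
  fix x assume "x \<in> {l - t * d | t. t * (d + 1) < l} \<union> {l + t * d | t. t < l}"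
  then consider t where "t * (d + 1) < l" "x = l - t * d" | t where "t < l" "x = l + t * d"
    by blast
  then have "\<exists>p. l \<in> nf_lengths (Suc (Suc d)) p \<and> x \<in> nf_lengths (Suc (Suc d)) p"
  proof cases
    case (1 t)
    have "l \<in> nf_lengths (Suc (Suc d)) (0, l)"
      using assms by (subst nf_lengths_GB) (auto intro!: exI[of _ 0])
    moreover have "x \<in> nf_lengths (Suc (Suc d)) (0, l)"
      using 1 assms by (subst nf_lengths_GB) (auto intro!: exI[of _ t] simp: algebra_simps)
    ultimately show ?thesis by blast
  next
    case (2 t)
    have "l \<in> nf_lengths (Suc (Suc d)) (0, l + t * d)"
      using 2 assms by (subst nf_lengths_GB) (auto intro!: exI[of _ t] simp: algebra_simps)
    moreover have "x \<in> nf_lengths (Suc (Suc d)) (0, l + t * d)"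
      using 2 assms by (subst nf_lengths_GB) (auto intro!: exI[of _ 0])
    ultimately show ?thesis by blast
  qed
  then show "x \<in> calU (Suc (Suc d)) l"
    unfolding calU_def by (auto simp: calL_eq_range_nf_lengths)
qed

lemma qln_eq_div: "1 \<le> l \<Longrightarrow> qln l (Suc (Suc d)) = (l - 1) div (d + 1)"
  unfolding qln_def by (cases l) (auto simp: div_Suc dvd_eq_mod_eq_0)

lemma arith_progressions_union:
  fixes l d :: nat
  assumes "1 \<le> l"
  defines "q \<equiv> (l - 1) div (d + 1)"
  shows "{l - t * d | t. t * (d + 1) < l} \<union> {l + t * d | t. t < l}
    = {l - q * d + d * k | k. k \<le> q + l - 1}"
proof -
  have below_iff: "t * (d + 1) < l \<longleftrightarrow> t \<le> q" for t
    using assms(1) unfolding q_def by (simp add: less_eq_div_iff_mult_less_eq) linarith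
  have "q * d \<le> l" using below_iff[of q] by (simp add: algebra_simps)
  show ?thesis
  proof (intro equalityI subsetI)
    fix x assume "x \<in> {l - t * d | t. t * (d + 1) < l} \<union> {l + t * d | t. t < l}"
    then consider t where "t \<le> q" "x = l - t * d" | t where "t < l" "x = l + t * d"
      using below_iff by blast
    then show "x \<in> {l - q * d + d * k | k. k \<le> q + l - 1}"
    proof cases
      case (1 t)
      have "t * d \<le> q * d" using \<open>t \<le> q\<close> by (rule mult_le_mono1)
      moreover have "d * (q - t) = q * d - t * d" by (metis diff_mult_distrib mult.commute)
      ultimately have "x = l - q * d + d * (q - t)" using 1 \<open>q * d \<le> l\<close> by linarith
      moreover have "q - t \<le> q + l - 1" using assms(1) by simp
      ultimately show ?thesis by blast
    next
      case (2 t)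
      then have "x = l - q * d + d * (q + t)" using \<open>q * d \<le> l\<close> by (simp add: algebra_simps)
      moreover have "q + t \<le> q + l - 1" using 2 by simp
      ultimately show ?thesis by blast
    qed
  next
    fix x assume "x \<in> {l - q * d + d * k | k. k \<le> q + l - 1}"
    then obtain k where k: "k \<le> q + l - 1" and x: "x = l - q * d + d * k" by blast
    show "x \<in> {l - t * d | t. t * (d + 1) < l} \<union> {l + t * d | t. t < l}"
    proof (cases "k \<le> q")
      case True
      have "k * d \<le> q * d" using True by (rule mult_le_mono1)
      moreover have "(q - k) * d = q * d - k * d" by (rule diff_mult_distrib)
      ultimately have "x = l - (q - k) * d" using x \<open>q * d \<le> l\<close> by (simp add: mult.commute)
      then show ?thesis using below_iff[of "q - k"] by auto
    next
      case False
      then have "x = l + (k - q) * d" and "k - q < l"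
        using x k assms(1) \<open>q * d \<le> l\<close> by (simp_all add: diff_mult_distrib algebra_simps)
      then show ?thesis by blast
    qed
  qed
qed

theorem corollary4p3:
  fixes n :: nat
  assumes "n \<ge> 3"
  shows "rhoB n = ereal (real (n - 1)) \<and> (\<forall>L\<in>calL n. rhoL L < rhoB n) \<and>
         (\<forall>l\<ge>2. calU n l =
           {l - qln l n * (n - 2) + (n - 2) * k | k. k \<le> qln l n + l - 1})"
proof -
  define d where "d = n - 2"
  have n: "n = Suc (Suc d)" and d: "1 \<le> d" using assms unfolding d_def by auto
  have rho: "rhoB n = ereal (real (n - 1))" using rhoB_eq[OF d] n by simp
  moreover have "\<forall>L\<in>calL n. rhoL L < rhoB n"
    using rhoL_nf_lengths_less[OF d] rho n by (auto simp: calL_eq_range_nf_lengths)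
  moreover have "calU n l = {l - qln l n * (n - 2) + (n - 2) * k | k. k \<le> qln l n + l - 1}"
    if "l \<ge> 2" for l
  proof -
    have l: "1 \<le> l" using that by simp
    show ?thesis unfolding n using calU_eq_progressions[OF l, of d]
      arith_progressions_union[OF l, of d] qln_eq_div[OF l, of d] by simp
  qed
  ultimately show ?thesis by blast
qed

end
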